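(* Let $\xi$ be a positive random variable with $\mathbb{E}(\xi^\eta)=\infty$ for some $\eta<1$. Then for every $p\in[0,1)$, $$\mathbb{P}^\Lambda_p(o\leftrightarrow\infty)=0\quad\text{for }\upsilon_\xi\text{-almost every environment }\Lambda.$$
   Context: Let $\xi$ be a positive random variable and let $\xi_1,\xi_2,\dots$ be i.i.d. copies of $\xi$. Set $x_0=0$ and $x_k=x_{k-1}+\xi_k$ for $k\ge1$, and let $\Lambda=\{x_0,x_1,x_2,\dots\}\subseteq\mathbb{R}$ (the environment); $\upsilon_\xi$ denotes the law of $\Lambda$. Given $\Lambda$, let $\mathcal{L}_\Lambda$ be the graph with vertex set $\{(x_i,n): i\in\mathbb{Z}_+,\ n\in\mathbb{Z}_+\}\subseteq\mathbb{R}^2$ (with $\mathbb{Z}_+=\{0,1,2,\dots\}$) and edge set $\{\{(x_i,n),(x_j,m)\}: |i-j|+|n-m|=1\}$. For $p\in[0,1]$, $\mathbb{P}^\Lambda_p$ is the probability measure on $\{0,1\}^{E(\mathcal{L}_\Lambda)}$ under which the edges are independently open with probability $p_e=p^{|e|}$, where $|e|$ is the Euclidean length of $e$ (so vertical edges have length $1$, and horizontal edges between the $i$-th and $(i+1)$-th column have length $\xi_{i+1}$). Let $o=(0,0)$ and let $\{o\leftrightarrow\infty\}$ be the event that the open cluster of $o$ is infinite. *)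

theory Defs
  imports "HOL-Probability.Probability"
begin

text \<open>Vertices of the lattice L_Lambda are indexed by (i,n) :: nat \<times> nat, standing for
  the point (x_i, n).  Edges are indexed by (b,i,n) :: bool \<times> nat \<times> nat:
  (True,i,n) is the horizontal edge between (i,n) and (i+1,n);
  (False,i,n) is the vertical edge between (i,n) and (i,n+1).
  The environment is given by the sequence of gaps xs, where xs k = xi_(k+1),
  so x_i = sum of xs k for k < i.\<close>

type_synonym edge = "bool \<times> nat \<times> nat"
type_synonym vertex = "nat \<times> nat"

definition edge_length :: "(nat \<Rightarrow> real) \<Rightarrow> edge \<Rightarrow> real" where
  "edge_length xs e = (case e of (True, i, n) \<Rightarrow> xs i | (False, i, n) \<Rightarrow> 1)"

definition edge_prob :: "real \<Rightarrow> (nat \<Rightarrow> real) \<Rightarrow> edge \<Rightarrow> real" where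
  "edge_prob p xs e = (case e of (True, i, n) \<Rightarrow> p powr (xs i) | (False, i, n) \<Rightarrow> p)"

definition perc_measure :: "real \<Rightarrow> (nat \<Rightarrow> real) \<Rightarrow> (edge \<Rightarrow> bool) measure" where
  "perc_measure p xs = (\<Pi>\<^sub>M e\<in>UNIV. measure_pmf (bernoulli_pmf (edge_prob p xs e)))"

definition open_adj :: "(edge \<Rightarrow> bool) \<Rightarrow> vertex \<Rightarrow> vertex \<Rightarrow> bool" where
  "open_adj w u v =
     ((fst v = Suc (fst u) \<and> snd v = snd u \<and> w (True, fst u, snd u)) \<or>
      (fst u = Suc (fst v) \<and> snd v = snd u \<and> w (True, fst v, snd v)) \<or>
      (fst v = fst u \<and> snd v = Suc (snd u) \<and> w (False, fst u, snd u)) \<or>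
      (fst v = fst u \<and> snd u = Suc (snd v) \<and> w (False, fst v, snd v)))"

definition open_cluster :: "(edge \<Rightarrow> bool) \<Rightarrow> vertex \<Rightarrow> vertex set" where
  "open_cluster w v = {u. (open_adj w)\<^sup>*\<^sup>* v u}"

definition percolates :: "(edge \<Rightarrow> bool) set" where
  "percolates = {w. infinite (open_cluster w (0, 0))}"

end

theory Submission
  imports Defs
begin

text \<open>If at some height \<open>k < H\<close> all vertical edges above the columns \<open>0..n\<close> are
  closed, and so are all horizontal edges leaving column \<open>n\<close> to the right below height \<open>H\<close>,
  then the cluster of the origin stays in the box \<open>[0,n] \<times> [0,k]\<close>. Hence
  \<open>P(o \<leftrightarrow> \<infinity>) \<le> (1 - (1-p)^(n+1))^H + H p^\<xi>\<^sub>n\<^sub>+\<^sub>1\<close> for all \<open>n\<close> and \<open>H\<close>.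
  If the gap \<open>\<xi>\<^sub>n\<^sub>+\<^sub>1\<close> is at least \<open>K(n+1)\<close>, where \<open>p^K = (1-p)/4\<close>, then
  \<open>H \<approx> (n+1)/(1-p)^(n+1)\<close> makes this bound at most \<open>2/(n+1)\<close>.
  Since \<open>E \<xi>\<^sup>\<eta> = \<infinity>\<close> with \<open>\<eta> < 1\<close> forces \<open>E \<xi> = \<infinity>\<close>, the probabilities
  \<open>P(\<xi> \<ge> K(n+1))\<close> are not summable, so by the second Borel--Cantelli lemma such long
  gaps occur for infinitely many \<open>n\<close> in almost every environment.\<close>

section \<open>Measurability of percolation\<close>

lemma space_perc_measure [simp]: "space (perc_measure p xs) = UNIV"
  by (simp add: perc_measure_def space_PiM)

lemma measurable_edge [measurable]: "Measurable.pred (perc_measure p xs) (\<lambda>w. w (e::edge))"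
proof -
  have "(\<lambda>w. w e) \<in> measurable (perc_measure p xs) (measure_pmf (bernoulli_pmf (edge_prob p xs e)))"
    unfolding perc_measure_def by (rule measurable_component_singleton) simp
  also have "\<dots> = measurable (perc_measure p xs) (count_space UNIV)"
    by (rule measurable_cong_sets) auto
  finally show ?thesis .
qed

lemma measurable_open_adj [measurable]:
  "Measurable.pred (perc_measure p xs) (\<lambda>w. open_adj w u v)"
  unfolding open_adj_def by measurable

lemma measurable_open_adj_relpowp [measurable]:
  "Measurable.pred (perc_measure p xs) (\<lambda>w. (open_adj w ^^ n) u v)"
proof (induction n arbitrary: v)
  case 0
  then show ?case by simp
next
  case (Suc n)
  have "(\<lambda>w. (open_adj w ^^ Suc n) u v) = (\<lambda>w. \<exists>y::vertex. (open_adj w ^^ n) u y \<and> open_adj w y v)"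
    by (auto simp: relcompp_apply fun_eq_iff)
  then show ?case using Suc by (simp; measurable)
qed

lemma infinite_vertex_set_iff_unbounded:
  "infinite (S :: vertex set) \<longleftrightarrow> (\<forall>N. \<exists>v\<in>S. N \<le> fst v + snd v)"
proof
  assume "infinite S"
  show "\<forall>N. \<exists>v\<in>S. N \<le> fst v + snd v"
  proof (rule ccontr)
    assume "\<not> ?thesis"
    then obtain N where "\<forall>v\<in>S. fst v + snd v < N" by (auto simp: not_le)
    then have "S \<subseteq> {..N} \<times> {..N}" by force
    with \<open>infinite S\<close> show False using finite_subset by blast
  qed
next
  assume unbounded: "\<forall>N. \<exists>v\<in>S. N \<le> fst v + snd v"
  show "infinite S"
  proof
    assume "finite S"
    then obtain N where "\<forall>x\<in>(\<lambda>v. fst v + snd v) ` S. x < N"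
      using finite_nat_set_iff_bounded by blast
    moreover obtain v where "v \<in> S" "N \<le> fst v + snd v" using unbounded by blast
    ultimately show False by (meson image_eqI not_le)
  qed
qed

lemma percolates_sets: "percolates \<in> sets (perc_measure p xs)"
proof -
  have "percolates = {w\<in>space (perc_measure p xs).
      \<forall>N. \<exists>v::vertex. N \<le> fst v + snd v \<and> (\<exists>n. (open_adj w ^^ n) (0,0) v)}"
    unfolding percolates_def open_cluster_def infinite_vertex_set_iff_unbounded
    by (auto simp: rtranclp_power) blast+
  also have "\<dots> \<in> sets (perc_measure p xs)"
    by measurable
  finally show ?thesis .
qed

section \<open>Blocking the cluster of the origin\<close>

definition all_levels_open :: "nat \<Rightarrow> nat \<Rightarrow> (edge \<Rightarrow> bool) set" where
  "all_levels_open n H = {w. \<forall>k<H. \<exists>i\<le>n. w (False,i,k)}"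

definition right_exit_open :: "nat \<Rightarrow> nat \<Rightarrow> (edge \<Rightarrow> bool) set" where
  "right_exit_open n H = (\<Union>h<H. {w. w (True,n,h)})"

lemma open_cluster_subset_box:
  assumes "k < H" and "\<forall>i\<le>n. \<not> w (False,i,k)" and "\<forall>h<H. \<not> w (True,n,h)"
  shows "open_cluster w (0,0) \<subseteq> {..n} \<times> {..k}"
proof -
  have "fst u \<le> n \<and> snd u \<le> k" if "(open_adj w)\<^sup>*\<^sup>* (0,0) u" for u
    using that
  proof (induction rule: rtranclp_induct)
    case base
    then show ?case by simp
  next
    case (step y z)
    then have y: "fst y \<le> n" "snd y \<le> k" by auto
    show ?case using step.hyps(2) unfolding open_adj_def
    proof (elim disjE conjE)
      assume z: "fst z = Suc (fst y)" "snd z = snd y" and "w (True, fst y, snd y)"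
      moreover have "snd y < H" using y assms(1) by simp
      ultimately have "fst y \<noteq> n" using assms(3) by blast
      then show ?thesis using z y by simp
    next
      assume z: "fst z = fst y" "snd z = Suc (snd y)" and "w (False, fst y, snd y)"
      then have "snd y \<noteq> k" using assms(2) y by blast
      then show ?thesis using z y by simp
    qed (use y in auto)
  qed
  then show ?thesis by (force simp: open_cluster_def)
qed

lemma percolates_subset: "percolates \<subseteq> all_levels_open n H \<union> right_exit_open n H"
proof
  fix w
  assume "w \<in> percolates"
  show "w \<in> all_levels_open n H \<union> right_exit_open n H"
  proof (rule ccontr)
    assume "\<not> ?thesis"
    then obtain k where "k < H" "\<forall>i\<le>n. \<not> w (False,i,k)" "\<forall>h<H. \<not> w (True,n,h)"
      by (auto simp: all_levels_open_def right_exit_open_def)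
    then have "finite (open_cluster w (0,0))"
      by (blast intro: finite_subset[OF open_cluster_subset_box])
    with \<open>w \<in> percolates\<close> show False by (simp add: percolates_def)
  qed
qed

section \<open>Probability of the blocking events\<close>

definition edge_law :: "real \<Rightarrow> (nat \<Rightarrow> real) \<Rightarrow> edge \<Rightarrow> bool measure" where
  "edge_law p xs e = measure_pmf (bernoulli_pmf (edge_prob p xs e))"

lemma perc_measure_eq_PiM: "perc_measure p xs = PiM UNIV (edge_law p xs)"
  by (simp add: perc_measure_def edge_law_def[abs_def])

lemma sets_edge_law [simp]: "sets (edge_law p xs e) = UNIV"
  and space_edge_law [simp]: "space (edge_law p xs e) = UNIV"
  by (simp_all add: edge_law_def)

lemma product_prob_space_edge_law: "product_prob_space (edge_law p xs)"
  unfolding product_prob_space_def product_prob_space_axioms_def product_sigma_finite_def edge_law_def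
  by (auto intro: prob_space_measure_pmf prob_space_imp_sigma_finite)

lemma prob_space_perc_measure: "prob_space (perc_measure p xs)"
  unfolding perc_measure_def by (intro prob_space_PiM prob_space_measure_pmf)

lemma edge_open_sets [measurable]: "{w. w e} \<in> sets (perc_measure p xs)"
  using predE[OF measurable_edge[where p=p and xs=xs and e=e]] by simp

lemma all_levels_open_sets: "all_levels_open n H \<in> sets (perc_measure p xs)"
proof -
  have "Measurable.pred (perc_measure p xs) (\<lambda>w. \<forall>k<H. \<exists>i\<le>n. w (False,i,k))"
    by measurable
  from predE[OF this] show ?thesis
    by (simp add: all_levels_open_def)
qed

lemma right_exit_open_sets: "right_exit_open n H \<in> sets (perc_measure p xs)"
  unfolding right_exit_open_def by auto

lemma measure_edge_open_le:
  assumes "0 \<le> p"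
  shows "measure (perc_measure p xs) {w. w e} \<le> edge_prob p xs e"
proof -
  interpret product_prob_space "edge_law p xs" UNIV by (rule product_prob_space_edge_law)
  have "emeasure (perc_measure p xs) {w. w e} = emeasure (edge_law p xs e) {True}"
    using emeasure_PiM_Collect_single[of e "{True}"] by (simp add: perc_measure_eq_PiM space_PiM)
  then have "measure (perc_measure p xs) {w. w e} = pmf (bernoulli_pmf (edge_prob p xs e)) True"
    by (simp add: edge_law_def emeasure_pmf_single measure_def)
  also have "\<dots> \<le> edge_prob p xs e"
  proof (cases "edge_prob p xs e \<le> 1")
    case True
    moreover have "0 \<le> edge_prob p xs e"
      using assms by (auto simp: edge_prob_def split: bool.split prod.split)
    ultimately show ?thesis by simp
  next
    case False
    then show ?thesis using pmf_le_1[of "bernoulli_pmf (edge_prob p xs e)" True] by linarith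
  qed
  finally show ?thesis .
qed

lemma measure_right_exit_open_le:
  assumes "0 \<le> p"
  shows "measure (perc_measure p xs) (right_exit_open n H) \<le> real H * p powr xs n"
proof -
  interpret prob_space "perc_measure p xs" by (rule prob_space_perc_measure)
  have "measure (perc_measure p xs) (right_exit_open n H)
      \<le> (\<Sum>h<H. measure (perc_measure p xs) {w. w (True,n,h)})"
    unfolding right_exit_open_def by (intro finite_measure_subadditive_finite) auto
  also have "\<dots> \<le> (\<Sum>h<H. p powr xs n)"
    by (intro sum_mono order_trans[OF measure_edge_open_le[OF assms]]) (simp add: edge_prob_def)
  finally show ?thesis by simp
qed

lemma indep_vars_edges: "prob_space.indep_vars (perc_measure p xs) (edge_law p xs) (\<lambda>e w. w e) UNIV"
proof -
  interpret prob_space "perc_measure p xs" by (rule prob_space_perc_measure)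
  have "(\<lambda>w. w e) \<in> measurable (perc_measure p xs) (edge_law p xs e)" for e
    unfolding perc_measure_eq_PiM by (rule measurable_component_singleton) simp
  then have "indep_vars (edge_law p xs) (\<lambda>e w. w e) UNIV \<longleftrightarrow>
      distr (perc_measure p xs) (PiM UNIV (edge_law p xs)) (\<lambda>w. \<lambda>e\<in>UNIV. w e)
        = PiM UNIV (\<lambda>e. distr (perc_measure p xs) (edge_law p xs e) (\<lambda>w. w e))"
    by (intro indep_vars_iff_distr_eq_PiM) auto
  moreover have "distr (perc_measure p xs) (edge_law p xs e) (\<lambda>w. w e) = edge_law p xs e" for e
    unfolding perc_measure_eq_PiM
    by (rule distr_PiM_component) (auto simp: edge_law_def intro: prob_space_measure_pmf)
  moreover have "(\<lambda>w::edge\<Rightarrow>bool. \<lambda>e\<in>UNIV. w e) = (\<lambda>w. w)" by (simp add: fun_eq_iff)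
  ultimately show ?thesis by (simp add: perc_measure_eq_PiM distr_id)
qed

lemma measure_level_open:
  assumes "0 \<le> p" "p \<le> 1"
  shows "measure (perc_measure p xs) {w. \<exists>i\<le>n. w (False,i,k)} = 1 - (1-p)^Suc n"
proof -
  interpret PS: prob_space "perc_measure p xs" by (rule prob_space_perc_measure)
  interpret product_prob_space "edge_law p xs" UNIV by (rule product_prob_space_edge_law)
  define L where "L = (\<lambda>i. (False,i,k)) ` {..n}"
  have "card L = Suc n" unfolding L_def by (subst card_image) (auto simp: inj_on_def)
  have "{w. \<forall>i\<le>n. \<not> w (False,i,k)} = {w \<in> space (PiM UNIV (edge_law p xs)). \<forall>e\<in>L. w e \<in> {False}}"
    by (auto simp: L_def space_PiM)
  moreover have "emeasure (PiM UNIV (edge_law p xs)) {w \<in> space (PiM UNIV (edge_law p xs)). \<forall>e\<in>L. w e \<in> {False}}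
      = (\<Prod>e\<in>L. emeasure (edge_law p xs e) {False})"
    by (rule emeasure_PiM_Collect) (auto simp: L_def)
  ultimately have "emeasure (perc_measure p xs) {w. \<forall>i\<le>n. \<not> w (False,i,k)}
      = (\<Prod>e\<in>L. emeasure (edge_law p xs e) {False})"
    by (simp only: perc_measure_eq_PiM)
  also have "\<dots> = (\<Prod>e\<in>L. ennreal (1-p))"
    by (intro prod.cong) (auto simp: L_def edge_law_def emeasure_pmf_single edge_prob_def assms)
  also have "\<dots> = ennreal ((1-p)^Suc n)"
    using \<open>card L = Suc n\<close> assms by (simp only: prod_constant) (subst ennreal_power, auto)
  finally have closed: "measure (perc_measure p xs) {w. \<forall>i\<le>n. \<not> w (False,i,k)} = (1-p)^Suc n"
    using assms by (simp add: PS.emeasure_eq_measure)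
  have "Measurable.pred (perc_measure p xs) (\<lambda>w. \<forall>i\<le>n. \<not> w (False,i,k))"
    by measurable
  from predE[OF this] have closed_sets: "{w. \<forall>i\<le>n. \<not> w (False,i,k)} \<in> sets (perc_measure p xs)"
    by simp
  have "{w. \<exists>i\<le>n. w (False,i,k)} = space (perc_measure p xs) - {w. \<forall>i\<le>n. \<not> w (False,i,k)}"
    by auto
  then show ?thesis
    by (simp only: PS.prob_compl[OF closed_sets] closed)
qed

lemma measure_all_levels_open:
  assumes "0 \<le> p" "p \<le> 1" "0 < H"
  shows "measure (perc_measure p xs) (all_levels_open n H) = (1 - (1-p)^Suc n)^H"
proof -
  interpret prob_space "perc_measure p xs" by (rule prob_space_perc_measure)
  define L where "L k = (\<lambda>i. (False,i,k)) ` {..n}" for k :: nat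
  define Q where "Q k = PiM (L k) (edge_law p xs)" for k
  define S where "S k = {f \<in> space (Q k). \<exists>i\<le>n. f (False,i,k)}" for k
  define level where "level k w = restrict (\<lambda>e. w e) (L k)" for k and w :: "edge \<Rightarrow> bool"
  have "disjoint_family_on L {..<H}" unfolding disjoint_family_on_def L_def by auto
  then have indep: "indep_vars Q level {..<H}"
    unfolding Q_def level_def by (intro indep_vars_restrict[OF indep_vars_edges]) simp
  have S_sets: "S k \<in> sets (Q k)" for k
  proof -
    have "S k = (\<Union>i\<in>{..n}. (\<lambda>f. f (False,i,k)) -` {True} \<inter> space (Q k))"
      by (auto simp: S_def)
    also have "\<dots> \<in> sets (Q k)"
      unfolding Q_def
      by (intro sets.finite_UN measurable_sets[OF measurable_component_singleton]) (auto simp: L_def)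
    finally show ?thesis .
  qed
  have level_open: "level k -` S k = {w. \<exists>i\<le>n. w (False,i,k)}" for k
    by (auto simp: S_def L_def Q_def level_def space_PiM PiE_iff)
  have "all_levels_open n H = (\<Inter>k\<in>{..<H}. level k -` S k \<inter> space (perc_measure p xs))"
    by (auto simp: all_levels_open_def level_open)
  also have "prob \<dots> = (\<Prod>k<H. prob (level k -` S k \<inter> space (perc_measure p xs)))"
    using assms(3) S_sets by (intro indep_varsD_finite[OF indep]) auto
  also have "\<dots> = (\<Prod>k<H. 1 - (1-p)^Suc n)"
    using measure_level_open[OF assms(1,2)] by (simp add: level_open)
  finally show ?thesis by simp
qed

lemma measure_percolates_le:
  assumes "0 \<le> p" "p \<le> 1" "0 < H"
  shows "measure (perc_measure p xs) percolates \<le> (1 - (1-p)^Suc n)^H + real H * p powr xs n"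
proof -
  interpret prob_space "perc_measure p xs" by (rule prob_space_perc_measure)
  note A = all_levels_open_sets[of n H p xs] and B = right_exit_open_sets[of n H p xs]
  have "measure (perc_measure p xs) percolates
      \<le> measure (perc_measure p xs) (all_levels_open n H \<union> right_exit_open n H)"
    using A B percolates_subset by (intro finite_measure_mono) auto
  also have "\<dots> \<le> measure (perc_measure p xs) (all_levels_open n H)
      + measure (perc_measure p xs) (right_exit_open n H)"
    using A B by (rule measure_Un_le)
  also have "\<dots> \<le> (1 - (1-p)^Suc n)^H + real H * p powr xs n"
    using measure_all_levels_open measure_right_exit_open_le assms by (simp add: add_mono)
  finally show ?thesis .
qed

lemma measure_percolates_p0: "measure (perc_measure 0 xs) percolates = 0"
  using measure_percolates_le[of 0 1 xs 0] measure_nonneg[of "perc_measure 0 xs" percolates]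
  by simp

section \<open>A long gap stops percolation\<close>

lemma one_minus_power_le_exp:
  fixes q :: real
  assumes "q \<le> 1"
  shows "(1 - q)^H \<le> exp (- (q * real H))"
proof -
  have "(1 - q)^H \<le> exp (-q)^H"
    by (intro power_mono) (use assms exp_ge_add_one_self[of "-q"] in auto)
  also have "\<dots> = exp (- (q * real H))"
    by (subst exp_of_nat_mult[symmetric]) (simp add: mult.commute)
  finally show ?thesis .
qed

lemma mult_le_four_power: "real (n+1) * (real n + 2) \<le> 4 ^ Suc n"
proof (induction n)
  case 0
  then show ?case by simp
next
  case (Suc n)
  have "real (Suc n + 1) * (real (Suc n) + 2) \<le> 4 * (real (n+1) * (real n + 2))"
    by (simp add: algebra_simps)
  also have "\<dots> \<le> 4 * 4 ^ Suc n" using Suc by simp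
  finally show ?case by simp
qed

lemma exists_height_blocking_bound:
  assumes p: "0 < p" "p < 1" and K: "p powr K = (1-p)/4" and x: "K * real (Suc n) \<le> x"
  shows "\<exists>H>0. (1 - (1-p)^Suc n)^H + real H * p powr x \<le> 2 / real (Suc n)"
proof -
  define q where "q = (1-p)^Suc n"
  have "0 < q" unfolding q_def using p by simp
  have "q \<le> 1" unfolding q_def using p by (intro power_le_one) auto
  define H where "H = nat \<lceil>real (Suc n) / q\<rceil>"
  have "real (Suc n) / q \<le> real H"
    unfolding H_def by linarith
  then have H_ge: "real (Suc n) \<le> q * real H"
    using \<open>0 < q\<close> by (simp add: field_simps)
  have H_le: "real H \<le> real (Suc n) / q + 1"
    unfolding H_def using \<open>0 < q\<close> of_int_ceiling_le_add_one[of "real (Suc n) / q"] by simp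
  have "0 < H" using H_ge by (cases H) auto
  have "(1 - q)^H \<le> exp (- real (Suc n))"
    using one_minus_power_le_exp[OF \<open>q \<le> 1\<close>, of H] H_ge by (simp add: order_trans)
  also have "\<dots> = 1 / exp (real (Suc n))"
    by (subst exp_minus) (simp add: divide_inverse)
  also have "\<dots> \<le> 1 / real (Suc n)"
    using exp_ge_add_one_self[of "real (Suc n)"] by (intro divide_left_mono) auto
  finally have first: "(1 - q)^H \<le> 1 / real (Suc n)" .
  have "p powr x \<le> p powr (K * real (Suc n))" using x p by (intro powr_mono') auto
  also have "\<dots> = (p powr K) powr real (Suc n)"
    by (simp only: powr_powr)
  also have "\<dots> = (p powr K) ^ Suc n"
    using p by (intro powr_realpow) simp
  also have "\<dots> = q / 4 ^ Suc n" by (simp add: K q_def power_divide)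
  finally have "real H * p powr x \<le> (real (Suc n) / q + 1) * (q / 4 ^ Suc n)"
    using H_le \<open>0 < q\<close> by (intro mult_mono) auto
  also have "\<dots> = (real (Suc n) + q) / 4 ^ Suc n" using \<open>0 < q\<close> by (simp add: field_simps)
  also have "\<dots> \<le> (real n + 2) / 4 ^ Suc n" using \<open>q \<le> 1\<close> by (intro divide_right_mono) auto
  also have "\<dots> \<le> 1 / real (Suc n)" using mult_le_four_power[of n] by (simp add: field_simps)
  finally show ?thesis
    using first \<open>0 < H\<close> unfolding q_def by (intro exI[of _ H]) auto
qed

lemma measure_percolates_eq_0_if_long_gaps:
  assumes p: "0 < p" "p < 1" and K: "p powr K = (1-p)/4"
    and gaps: "\<forall>N. \<exists>n\<ge>N. K * real (Suc n) \<le> xs n"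
  shows "measure (perc_measure p xs) percolates = 0"
proof -
  have "measure (perc_measure p xs) percolates \<le> 2 / real (Suc N)" for N
  proof -
    obtain n where n: "N \<le> n" "K * real (Suc n) \<le> xs n" using gaps by blast
    then obtain H where "0 < H" "(1 - (1-p)^Suc n)^H + real H * p powr xs n \<le> 2 / real (Suc n)"
      using exists_height_blocking_bound[OF p K] by blast
    then have "measure (perc_measure p xs) percolates \<le> 2 / real (Suc n)"
      using measure_percolates_le[of p H xs n] p by linarith
    also have "\<dots> \<le> 2 / real (Suc N)" using n(1) by (intro divide_left_mono) auto
    finally show ?thesis .
  qed
  moreover have "(\<lambda>N. 2 / real (Suc N)) \<longlonglongrightarrow> 0"
    by (rule LIMSEQ_Suc[OF lim_const_over_n])
  ultimately have "measure (perc_measure p xs) percolates \<le> 0"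
    using LIMSEQ_le_const by blast
  then show ?thesis using measure_nonneg[of "perc_measure p xs" percolates] by linarith
qed

section \<open>Environments with infinitely many long gaps\<close>

lemma powr_le_one_plus:
  fixes x \<eta> :: real
  assumes "0 \<le> x" "0 \<le> \<eta>" "\<eta> \<le> 1"
  shows "x powr \<eta> \<le> 1 + x"
proof (cases "x \<le> 1")
  case True
  then have "x powr \<eta> \<le> 1" using assms by (intro powr_le1) auto
  then show ?thesis using assms by simp
next
  case False
  then have "x powr \<eta> \<le> x powr 1" using assms by (intro powr_mono) auto
  then show ?thesis using False by simp
qed

lemma (in prob_space) nn_integral_eq_top_of_powr:
  assumes X: "X \<in> borel_measurable M" and nonneg: "AE \<omega> in M. 0 \<le> X \<omega>"
    and "0 \<le> \<eta>" "\<eta> \<le> 1" and top: "(\<integral>\<^sup>+\<omega>. ennreal (X \<omega> powr \<eta>) \<partial>M) = \<infinity>"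
  shows "(\<integral>\<^sup>+\<omega>. ennreal (X \<omega>) \<partial>M) = \<infinity>"
proof -
  have "\<infinity> \<le> (\<integral>\<^sup>+\<omega>. 1 + ennreal (X \<omega>) \<partial>M)"
    unfolding top[symmetric]
  proof (rule nn_integral_mono_AE)
    show "AE \<omega> in M. ennreal (X \<omega> powr \<eta>) \<le> 1 + ennreal (X \<omega>)"
      using nonneg
    proof eventually_elim
      fix \<omega>
      assume "0 \<le> X \<omega>"
      then have "ennreal (X \<omega> powr \<eta>) \<le> ennreal (1 + X \<omega>)"
        using powr_le_one_plus \<open>0 \<le> \<eta>\<close> \<open>\<eta> \<le> 1\<close> by (intro ennreal_leI) auto
      then show "ennreal (X \<omega> powr \<eta>) \<le> 1 + ennreal (X \<omega>)"
        using \<open>0 \<le> X \<omega>\<close> by (simp add: ennreal_plus)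
    qed
  qed
  also have "\<dots> = 1 + (\<integral>\<^sup>+\<omega>. ennreal (X \<omega>) \<partial>M)"
    using X by (subst nn_integral_add) (auto simp: emeasure_space_1)
  finally have "1 + (\<integral>\<^sup>+\<omega>. ennreal (X \<omega>) \<partial>M) = \<infinity>"
    by (simp add: top_unique)
  then show ?thesis by (simp add: ennreal_add_eq_top)
qed

lemma le_mult_one_plus_count_multiples:
  fixes x K :: real
  assumes "0 < K" and "0 \<le> x"
  shows "ennreal x \<le> ennreal K * (1 + (\<Sum>n. if K * real (Suc n) \<le> x then 1 else 0))"
proof -
  define m where "m = nat \<lfloor>x / K\<rfloor>"
  have "real m = of_int \<lfloor>x / K\<rfloor>"
    using assms unfolding m_def by simp
  then have m: "real m \<le> x / K" "x / K < real m + 1"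
    using of_int_floor_le[of "x / K"] real_of_int_floor_add_one_gt[of "x / K"] by linarith+
  have "K * real (Suc n) \<le> x" if "n < m" for n
  proof -
    have "K * real (Suc n) \<le> K * real m" using that \<open>0 < K\<close> by simp
    also have "\<dots> \<le> x" using m \<open>0 < K\<close> by (simp add: field_simps)
    finally show ?thesis .
  qed
  then have "(of_nat m :: ennreal) = (\<Sum>n<m. if K * real (Suc n) \<le> x then 1 else 0)"
    by simp
  also have "\<dots> \<le> (\<Sum>n. if K * real (Suc n) \<le> x then 1 else 0)"
    by (rule sum_le_suminf) auto
  finally have count: "(of_nat m :: ennreal) \<le> (\<Sum>n. if K * real (Suc n) \<le> x then 1 else 0)" .
  have "ennreal x \<le> ennreal (K * (1 + real m))"
    using m \<open>0 < K\<close> by (intro ennreal_leI) (simp add: field_simps)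
  also have "\<dots> = ennreal K * (1 + of_nat m)"
    using \<open>0 < K\<close> by (simp add: ennreal_mult ennreal_plus ennreal_of_nat_eq_real_of_nat)
  also have "\<dots> \<le> ennreal K * (1 + (\<Sum>n. if K * real (Suc n) \<le> x then 1 else 0))"
    using count by (intro mult_left_mono add_left_mono) auto
  finally show ?thesis .
qed

lemma (in prob_space) nn_integral_le_tail_sum:
  assumes X: "X \<in> borel_measurable M" and nonneg: "AE \<omega> in M. 0 \<le> X \<omega>" and "0 < K"
  shows "(\<integral>\<^sup>+\<omega>. ennreal (X \<omega>) \<partial>M)
    \<le> ennreal K * (1 + (\<Sum>n. emeasure M {\<omega>\<in>space M. K * real (Suc n) \<le> X \<omega>}))"
proof -
  define T where "T n = {\<omega>\<in>space M. K * real (Suc n) \<le> X \<omega>}" for n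
  have T_sets [measurable]: "T n \<in> sets M" for n
    unfolding T_def using X by measurable
  have "(\<integral>\<^sup>+\<omega>. ennreal (X \<omega>) \<partial>M) \<le> (\<integral>\<^sup>+\<omega>. ennreal K * (1 + (\<Sum>n. indicator (T n) \<omega>)) \<partial>M)"
  proof (rule nn_integral_mono_AE)
    show "AE \<omega> in M. ennreal (X \<omega>) \<le> ennreal K * (1 + (\<Sum>n. indicator (T n) \<omega>))"
      using nonneg AE_space
    proof eventually_elim
      fix \<omega>
      assume "0 \<le> X \<omega>" and "\<omega> \<in> space M"
      then have "(\<lambda>n. indicator (T n) \<omega> :: ennreal) = (\<lambda>n. if K * real (Suc n) \<le> X \<omega> then 1 else 0)"
        by (auto simp: fun_eq_iff indicator_def T_def)
      then show "ennreal (X \<omega>) \<le> ennreal K * (1 + (\<Sum>n. indicator (T n) \<omega>))"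
        using le_mult_one_plus_count_multiples[OF \<open>0 < K\<close> \<open>0 \<le> X \<omega>\<close>] by simp
    qed
  qed
  also have "\<dots> = ennreal K * (1 + (\<integral>\<^sup>+\<omega>. (\<Sum>n. indicator (T n) \<omega>) \<partial>M))"
    by (subst nn_integral_cmult, measurable) (subst nn_integral_add, auto simp: emeasure_space_1)
  also have "(\<integral>\<^sup>+\<omega>. (\<Sum>n. indicator (T n) \<omega>) \<partial>M) = (\<Sum>n. emeasure M (T n))"
    by (subst nn_integral_suminf) (auto simp: nn_integral_indicator)
  finally show ?thesis by (simp only: T_def)
qed

lemma (in prob_space) not_summable_tail_prob:
  assumes X: "X \<in> borel_measurable M" and nonneg: "AE \<omega> in M. 0 \<le> X \<omega>"
    and top: "(\<integral>\<^sup>+\<omega>. ennreal (X \<omega>) \<partial>M) = \<infinity>" and "0 < K"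
  shows "\<not> summable (\<lambda>n. prob {\<omega>\<in>space M. K * real (Suc n) \<le> X \<omega>})"
proof
  assume "summable (\<lambda>n. prob {\<omega>\<in>space M. K * real (Suc n) \<le> X \<omega>})"
  then have "(\<Sum>n. emeasure M {\<omega>\<in>space M. K * real (Suc n) \<le> X \<omega>}) < \<infinity>"
    by (simp add: emeasure_eq_measure suminf_ennreal2)
  then have "ennreal K * (1 + (\<Sum>n. emeasure M {\<omega>\<in>space M. K * real (Suc n) \<le> X \<omega>})) < \<infinity>"
    by (simp add: ennreal_mult_less_top less_top)
  with nn_integral_le_tail_sum[OF X nonneg \<open>0 < K\<close>] top show False
    by simp
qed

lemma (in product_prob_space) measure_PiM_avoid_le_exp:
  assumes "finite J" "J \<subseteq> I" "\<And>i. i \<in> J \<Longrightarrow> A i \<in> sets (M i)"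
  shows "measure (PiM I M) {x\<in>space (PiM I M). \<forall>i\<in>J. x i \<notin> A i}
    \<le> exp (- (\<Sum>i\<in>J. measure (M i) (A i)))"
proof -
  have "{x\<in>space (PiM I M). \<forall>i\<in>J. x i \<notin> A i} = {x\<in>space (PiM I M). \<forall>i\<in>J. x i \<in> space (M i) - A i}"
    using \<open>J \<subseteq> I\<close> by (auto simp: space_PiM)
  also have "emeasure (PiM I M) \<dots> = (\<Prod>i\<in>J. emeasure (M i) (space (M i) - A i))"
    using assms by (intro emeasure_PiM_Collect) auto
  also have "\<dots> = ennreal (\<Prod>i\<in>J. 1 - measure (M i) (A i))"
    using assms by (simp add: M.emeasure_eq_measure M.prob_compl prod_ennreal)
  finally have "measure (PiM I M) {x\<in>space (PiM I M). \<forall>i\<in>J. x i \<notin> A i} = (\<Prod>i\<in>J. 1 - measure (M i) (A i))"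
    by (simp add: emeasure_eq_measure prod_nonneg)
  also have "\<dots> \<le> (\<Prod>i\<in>J. exp (- measure (M i) (A i)))"
  proof (intro prod_mono conjI)
    fix i
    show "0 \<le> 1 - measure (M i) (A i)" by (simp add: M.prob_le_1)
    show "1 - measure (M i) (A i) \<le> exp (- measure (M i) (A i))"
      using exp_ge_add_one_self[of "- measure (M i) (A i)"] by simp
  qed
  also have "\<dots> = exp (- (\<Sum>i\<in>J. measure (M i) (A i)))"
    by (simp add: exp_sum \<open>finite J\<close> flip: sum_negf)
  finally show ?thesis .
qed

lemma not_summable_imp_tail_sum_unbounded:
  fixes a :: "nat \<Rightarrow> real"
  assumes "\<And>n. 0 \<le> a n" and "\<not> summable a"
  shows "\<exists>m. B < (\<Sum>n\<in>{N..<N+m}. a n)"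
proof (rule ccontr)
  assume "\<not> ?thesis"
  moreover have "(\<Sum>i<m. a (i + N)) = (\<Sum>n\<in>{N..<N+m}. a n)" for m
    using sum.shift_bounds_nat_ivl[of a 0 N m] by (simp add: atLeast0LessThan add.commute)
  ultimately have "(\<Sum>i<m. a (i + N)) \<le> B" for m
    by (simp add: not_less)
  then have "summable (\<lambda>i. a (i + N))"
    using assms(1) by (intro summableI_nonneg_bounded[where x=B]) auto
  with assms(2) show False by simp
qed

lemma AE_PiM_infinitely_often:
  fixes M :: "nat \<Rightarrow> 'a measure" and A :: "nat \<Rightarrow> 'a set"
  assumes "\<And>n. prob_space (M n)" and A: "\<And>n. A n \<in> sets (M n)"
    and diverges: "\<not> summable (\<lambda>n. measure (M n) (A n))"
  shows "AE x in (\<Pi>\<^sub>M n\<in>UNIV. M n). \<forall>N. \<exists>n\<ge>N. x n \<in> A n"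
proof -
  interpret product_prob_space M UNIV
    unfolding product_prob_space_def product_prob_space_axioms_def product_sigma_finite_def
    using assms(1) by (auto intro: prob_space_imp_sigma_finite)
  define block where "block N m = {x\<in>space (\<Pi>\<^sub>M n\<in>UNIV. M n). \<forall>n\<in>{N..<N+m}. x n \<notin> A n}" for N m
  have block_sets: "block N m \<in> sets (\<Pi>\<^sub>M n\<in>UNIV. M n)" for N m
  proof -
    have "block N m = prod_emb UNIV M {N..<N+m} (\<Pi>\<^sub>E n\<in>{N..<N+m}. space (M n) - A n)"
      by (auto simp: block_def prod_emb_def space_PiM PiE_iff)
    also have "\<dots> \<in> sets (\<Pi>\<^sub>M n\<in>UNIV. M n)"
      using A by (intro sets_PiM_I) auto
    finally show ?thesis .
  qed
  have "(\<Inter>m. block N m) \<in> null_sets (\<Pi>\<^sub>M n\<in>UNIV. M n)" for N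
  proof -
    have small: "measure (\<Pi>\<^sub>M n\<in>UNIV. M n) (\<Inter>m. block N m) \<le> 0 + e" if "0 < e" for e
    proof -
      obtain m where m: "- ln e < (\<Sum>n\<in>{N..<N+m}. measure (M n) (A n))"
        using not_summable_imp_tail_sum_unbounded[OF measure_nonneg diverges] by blast
      have "measure (\<Pi>\<^sub>M n\<in>UNIV. M n) (\<Inter>m. block N m) \<le> measure (\<Pi>\<^sub>M n\<in>UNIV. M n) (block N m)"
        using block_sets by (intro finite_measure_mono) auto
      also have "\<dots> \<le> exp (- (\<Sum>n\<in>{N..<N+m}. measure (M n) (A n)))"
        unfolding block_def using A by (intro measure_PiM_avoid_le_exp) auto
      also have "\<dots> < exp (ln e)"
        using m by simp
      finally show ?thesis using \<open>0 < e\<close> by simp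
    qed
    have "measure (\<Pi>\<^sub>M n\<in>UNIV. M n) (\<Inter>m. block N m) = 0"
      using field_le_epsilon[OF small] measure_nonneg by (metis order_antisym)
    moreover have "(\<Inter>m. block N m) \<in> sets (\<Pi>\<^sub>M n\<in>UNIV. M n)"
      using block_sets by auto
    ultimately show ?thesis
      by (auto simp: null_sets_def emeasure_eq_measure)
  qed
  then have "(\<Union>N. \<Inter>m. block N m) \<in> null_sets (\<Pi>\<^sub>M n\<in>UNIV. M n)"
    by auto
  then show ?thesis
    by (rule AE_I') (force simp: block_def not_le)
qed

lemma AE_frequent_long_gaps:
  assumes "prob_space M" and \<xi>: "\<xi> \<in> borel_measurable M" and nonneg: "AE \<omega> in M. 0 \<le> \<xi> \<omega>"
    and top: "(\<integral>\<^sup>+\<omega>. ennreal (\<xi> \<omega>) \<partial>M) = \<infinity>" and "0 < K"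
  shows "AE xs in (\<Pi>\<^sub>M k\<in>UNIV. distr M borel \<xi>). \<forall>N. \<exists>n\<ge>N. K * real (Suc n) \<le> xs n"
proof -
  interpret prob_space M by fact
  have "measure (distr M borel \<xi>) {K * real (Suc n)..} = prob {\<omega>\<in>space M. K * real (Suc n) \<le> \<xi> \<omega>}" for n
    using \<xi> by (subst measure_distr) (auto simp: vimage_def Int_def conj_commute)
  then have "\<not> summable (\<lambda>n. measure (distr M borel \<xi>) {K * real (Suc n)..})"
    using not_summable_tail_prob[OF \<xi> nonneg top \<open>0 < K\<close>] by simp
  then have "AE xs in (\<Pi>\<^sub>M k\<in>UNIV. distr M borel \<xi>). \<forall>N. \<exists>n\<ge>N. xs n \<in> {K * real (Suc n)..}"
    using \<xi> by (intro AE_PiM_infinitely_often prob_space_distr) auto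
  then show ?thesis by simp
qed

theorem theorem1p2:
  fixes M :: "'a measure" and \<xi> :: "'a \<Rightarrow> real" and \<eta> :: real and p :: real
  assumes "prob_space M"
    and "\<xi> \<in> borel_measurable M"
    and "AE \<omega> in M. \<xi> \<omega> > 0"
    and "0 < \<eta>" and "\<eta> < 1"
    and "(\<integral>\<^sup>+ \<omega>. ennreal (\<xi> \<omega> powr \<eta>) \<partial>M) = \<infinity>"
    and "0 \<le> p" and "p < 1"
  shows "AE xs in (\<Pi>\<^sub>M k\<in>UNIV. distr M borel \<xi>).
           percolates \<in> sets (perc_measure p xs) \<and> measure (perc_measure p xs) percolates = 0"
proof (cases "p = 0")
  case True
  then show ?thesis using percolates_sets measure_percolates_p0 by simp
next
  case False
  with assms have p: "0 < p" "p < 1" by auto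
  define K where "K = ln ((1-p)/4) / ln p"
  have K: "p powr K = (1-p)/4" and "0 < K"
    using p by (auto simp: K_def powr_def divide_neg_neg)
  have nonneg: "AE \<omega> in M. 0 \<le> \<xi> \<omega>"
    using assms(3) by eventually_elim simp
  have "(\<integral>\<^sup>+\<omega>. ennreal (\<xi> \<omega>) \<partial>M) = \<infinity>"
    using assms(1,2,4-6) nonneg by (intro prob_space.nn_integral_eq_top_of_powr[of M \<xi> \<eta>]) auto
  then have "AE xs in (\<Pi>\<^sub>M k\<in>UNIV. distr M borel \<xi>). \<forall>N. \<exists>n\<ge>N. K * real (Suc n) \<le> xs n"
    using assms(1,2) nonneg \<open>0 < K\<close> by (intro AE_frequent_long_gaps)
  then show ?thesis
    by eventually_elim (simp add: percolates_sets measure_percolates_eq_0_if_long_gaps[OF p K])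
qed

end
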